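(* Let $G=G(n,p)$ be an Erdős–Rényi random graph on vertex set $\{1,\dots,n\}$, and let $G'$ be obtained from $G$ by choosing an unordered pair of distinct vertices uniformly at random among the $\binom n2$ pairs and independently resampling the presence of the edge between them (present with probability $p$). Let $W,W'$ be the numbers of triangles in $G,G'$, and $Q_1(G)=\mathbb{P}[W'=W+1\mid G]$. Then \begin{align*} \mathrm{Var}\,Q_1(G)\le{}&\frac{n-2}{\binom n2}p^4(1-p)(1-p^2)^{n-3}\bigl(1-p^2(1-p)(1-p^2)^{n-3}\bigr)\\ &+\frac{4\binom{n-2}{2}}{\binom n2}p^5(1-p)^2\bigl((1-2p^2+p^3)^{n-4}-p(1-p^2)^{2n-6}\bigr)\\ &+\frac{4\binom{n-2}{2}}{\binom n2}p^5(1-p)^2(1-p^2)^{2n-8}\bigl(1-p-p(1-p^2)^2\bigr)\\ &+\frac{12\binom{n-2}{3}}{\binom n2}p^6(1-p)^2\bigl((1-p)^{n-3}(1+p-p^2)^{n-5}-(1-p^2)^{2n-6}\bigr)\\ &+\frac{12\binom{n-2}{3}}{\binom n2}p^6(1-p)^2(1-p^2)^{2n-9}\bigl(-2p+4p^2-3p^4+p^6\bigr)\\ &+\frac{3\binom{n-2}{3}}{\binom n2}p^6(1-p)^2(1-p^2)^{2n-10}\bigl(4p^3-7p^4+4p^6-p^8\bigr)\\ &+\frac{12\binom{n-2}{4}}{\binom n2}p^6(1-p)^2(1-p^2)^{2n-10}\bigl(4p^3-7p^4+4p^6-p^8\bigr). \end{align*}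
   Context: $G(n,p)$: each of the $\binom n2$ edges is present independently with probability $p$. A triangle is a set of three vertices that are pairwise adjacent. *)

theory Defs
  imports "HOL-Probability.Probability"
begin

definition vpairs :: "nat \<Rightarrow> nat set set" where
  "vpairs n = {e. e \<subseteq> {1..n} \<and> card e = 2}"

definition gnp :: "nat \<Rightarrow> real \<Rightarrow> nat set set pmf" where
  "gnp n p = map_pmf (\<lambda>f. {e \<in> vpairs n. f e})
                     (Pi_pmf (vpairs n) False (\<lambda>_. bernoulli_pmf p))"

definition triangles :: "nat \<Rightarrow> nat set set \<Rightarrow> nat" where
  "triangles n G = card {T. T \<subseteq> {1..n} \<and> card T = 3 \<and>
      (\<forall>x\<in>T. \<forall>y\<in>T. x \<noteq> y \<longrightarrow> {x, y} \<in> G)}"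

definition resample :: "nat \<Rightarrow> real \<Rightarrow> nat set set \<Rightarrow> nat set set pmf" where
  "resample n p G =
     do { e \<leftarrow> pmf_of_set (vpairs n);
          b \<leftarrow> bernoulli_pmf p;
          return_pmf (if b then insert e G else G - {e}) }"

definition Q1 :: "nat \<Rightarrow> real \<Rightarrow> nat set set \<Rightarrow> real" where
  "Q1 n p G = measure_pmf.prob (resample n p G)
                {G'. triangles n G' = triangles n G + 1}"

end

theory Submission
  imports Defs
begin

text \<open>Write \<open>X\<^sub>e\<close> for the indicator that the pair \<open>e\<close> is absent and its endpoints have exactly
  one common neighbour; adding \<open>e\<close> then creates exactly one triangle, so
  \<open>Q\<^sub>1(G) = p / (n choose 2) \<cdot> \<Sum>\<^sub>e X\<^sub>e\<close> and the variance is a sum of the second moments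
  \<open>E[X\<^sub>e X\<^sub>f]\<close>. For a vertex \<open>w\<close> outside \<open>e \<union> f\<close>, whether \<open>w\<close> is a common neighbour of \<open>e\<close>
  or of \<open>f\<close> depends only on the pairs from \<open>w\<close> to \<open>e \<union> f\<close>; these blocks of pairs are disjoint
  for different \<open>w\<close> and disjoint from the pairs inside \<open>e \<union> f\<close>. So the numbers of such common
  neighbours have an explicit joint law, which gives \<open>E[X\<^sub>e X\<^sub>f]\<close> in closed form according to
  whether \<open>e = f\<close>, \<open>e\<close> and \<open>f\<close> share a vertex, or are disjoint. The resulting exact variance is
  the stated bound minus \<open>(5n\<^sup>2 - 23n + 26) p\<^sup>6 (1-p)\<^sup>2 (1-p\<^sup>2)\<^bsup>2n-6\<^esup> / (n choose 2) \<ge> 0\<close>, a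
  polynomial identity once \<open>n = k + 6\<close> removes the truncated exponents (the cases \<open>n \<le> 5\<close> are
  checked directly).\<close>

section \<open>Independence in product distributions\<close>

lemma finite_set_pmf_Pi_pmf:
  fixes dflt :: "'b::finite"
  assumes "finite A"
  shows "finite (set_pmf (Pi_pmf A dflt D))"
proof -
  have "set_pmf (Pi_pmf A dflt D) \<subseteq> PiE_dflt A dflt (\<lambda>_. UNIV)"
    using set_Pi_pmf_subset'[OF assms, of dflt D] unfolding PiE_dflt_def by auto
  moreover have "finite (PiE_dflt A dflt (\<lambda>_. UNIV :: 'b set))"
    using assms by (intro finite_PiE_dflt) auto
  ultimately show ?thesis by (rule finite_subset)
qed

lemma integrable_Pi_pmf_finite:
  fixes dflt :: "'b::finite" and f :: "('a \<Rightarrow> 'b) \<Rightarrow> real"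
  shows "finite A \<Longrightarrow> integrable (measure_pmf (Pi_pmf A dflt D)) f"
  by (intro integrable_measure_pmf_finite finite_set_pmf_Pi_pmf)

lemma expectation_pair_pmf:
  fixes F :: "'a \<times> 'b \<Rightarrow> real"
  assumes "finite (set_pmf M)" "finite (set_pmf N)"
  shows "measure_pmf.expectation (pair_pmf M N) F
       = measure_pmf.expectation M (\<lambda>a. measure_pmf.expectation N (\<lambda>b. F (a, b)))"
proof -
  have "measure_pmf.expectation (pair_pmf M N) F
      = (\<Sum>z\<in>set_pmf M \<times> set_pmf N. F z * pmf (pair_pmf M N) z)"
    using assms by (intro integral_measure_pmf_real) auto
  also have "\<dots> = (\<Sum>a\<in>set_pmf M. \<Sum>b\<in>set_pmf N. F (a,b) * (pmf M a * pmf N b))"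
    by (simp add: sum.cartesian_product case_prod_beta) (intro sum.cong refl, auto simp: pmf_pair)
  also have "\<dots> = (\<Sum>a\<in>set_pmf M. (\<Sum>b\<in>set_pmf N. F (a,b) * pmf N b) * pmf M a)"
    by (simp add: sum_distrib_right sum_distrib_left mult_ac)
  also have "\<dots> = measure_pmf.expectation M (\<lambda>a. measure_pmf.expectation N (\<lambda>b. F (a, b)))"
    using assms by (simp add: integral_measure_pmf_real)
  finally show ?thesis .
qed

lemma expectation_pair_pmf_mult:
  fixes f :: "'a \<Rightarrow> real" and g :: "'b \<Rightarrow> real"
  assumes "finite (set_pmf M)" "finite (set_pmf N)"
  shows "measure_pmf.expectation (pair_pmf M N) (\<lambda>z. f (fst z) * g (snd z))
       = measure_pmf.expectation M f * measure_pmf.expectation N g"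
  using assms by (simp add: expectation_pair_pmf)

definition depends_on :: "'a set \<Rightarrow> (('a \<Rightarrow> 'b) \<Rightarrow> 'c) \<Rightarrow> bool" where
  "depends_on B g \<longleftrightarrow> (\<forall>y y'. (\<forall>x\<in>B. y x = y' x) \<longrightarrow> g y = g y')"

lemma depends_onI: "(\<And>y y'. (\<And>x. x \<in> B \<Longrightarrow> y x = y' x) \<Longrightarrow> g y = g y') \<Longrightarrow> depends_on B g"
  unfolding depends_on_def by blast

lemma depends_onD: "depends_on B g \<Longrightarrow> (\<And>x. x \<in> B \<Longrightarrow> y x = y' x) \<Longrightarrow> g y = g y'"
  unfolding depends_on_def by blast

lemma depends_on_const: "depends_on B (\<lambda>_. c)"
  unfolding depends_on_def by simp

lemma depends_on_comp: "depends_on B g \<Longrightarrow> depends_on B (\<lambda>y. h (g y))"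
  unfolding depends_on_def by metis

lemma depends_on_mult:
  "depends_on B f \<Longrightarrow> depends_on C g \<Longrightarrow> depends_on (B \<union> C) (\<lambda>y. f y * g y)"
  unfolding depends_on_def by (metis UnI1 UnI2)

lemma expectation_Pi_pmf_split:
  fixes dflt :: "'b::finite" and f g :: "('a \<Rightarrow> 'b) \<Rightarrow> real"
  assumes A: "finite A" and C: "C \<subseteq> A" and B: "B \<inter> C = {}"
    and f: "depends_on C f" and g: "depends_on B g"
  shows "measure_pmf.expectation (Pi_pmf A dflt D) (\<lambda>y. f y * g y)
       = measure_pmf.expectation (Pi_pmf C dflt D) f *
         measure_pmf.expectation (Pi_pmf (A - C) dflt D) g"
proof -
  let ?merge = "\<lambda>(y, y') x. if x \<in> C then y x else y' x"
  have fC: "finite C" using A C by (rule finite_subset[rotated])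
  have "Pi_pmf A dflt D = Pi_pmf (C \<union> (A - C)) dflt D" using C by (simp add: Un_absorb1)
  also have "\<dots> = map_pmf ?merge (pair_pmf (Pi_pmf C dflt D) (Pi_pmf (A - C) dflt D))"
    using A fC by (intro Pi_pmf_union) auto
  finally have split: "Pi_pmf A dflt D = \<dots>" .
  have "f (?merge z) = f (fst z)" for z
    by (rule depends_onD[OF f]) (auto split: prod.splits)
  moreover have "g (?merge z) = g (snd z)" for z
    by (rule depends_onD[OF g]) (use B in \<open>auto split: prod.splits\<close>)
  ultimately have "measure_pmf.expectation (Pi_pmf A dflt D) (\<lambda>y. f y * g y)
     = measure_pmf.expectation (pair_pmf (Pi_pmf C dflt D) (Pi_pmf (A - C) dflt D))
         (\<lambda>z. f (fst z) * g (snd z))"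
    by (simp add: split)
  also have "\<dots> = measure_pmf.expectation (Pi_pmf C dflt D) f *
         measure_pmf.expectation (Pi_pmf (A - C) dflt D) g"
    using A fC by (intro expectation_pair_pmf_mult finite_set_pmf_Pi_pmf) auto
  finally show ?thesis .
qed

lemma expectation_Pi_pmf_restrict:
  fixes dflt :: "'b::finite" and f :: "('a \<Rightarrow> 'b) \<Rightarrow> real"
  assumes "finite A" "C \<subseteq> A" "depends_on C f"
  shows "measure_pmf.expectation (Pi_pmf A dflt D) f = measure_pmf.expectation (Pi_pmf C dflt D) f"
  using expectation_Pi_pmf_split[OF assms(1,2) _ assms(3) depends_on_const[of "{}" 1]] by simp

lemma expectation_Pi_pmf_mult:
  fixes dflt :: "'b::finite" and f g :: "('a \<Rightarrow> 'b) \<Rightarrow> real"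
  assumes A: "finite A" and C: "C \<subseteq> A" and B: "B \<inter> C = {}"
    and f: "depends_on C f" and g: "depends_on B g"
  shows "measure_pmf.expectation (Pi_pmf A dflt D) (\<lambda>y. f y * g y)
       = measure_pmf.expectation (Pi_pmf A dflt D) f * measure_pmf.expectation (Pi_pmf A dflt D) g"
proof -
  have "measure_pmf.expectation (Pi_pmf A dflt D) g
      = measure_pmf.expectation (Pi_pmf (A - C) dflt D) g"
    using expectation_Pi_pmf_split[OF A C B depends_on_const[of C 1] g] by simp
  thus ?thesis
    using expectation_Pi_pmf_split[OF assms] expectation_Pi_pmf_restrict[OF A C f]
    by simp
qed

lemma expectation_Pi_pmf_prod_blocks:
  fixes dflt :: "'b::finite" and f :: "('a \<Rightarrow> 'b) \<Rightarrow> real"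
    and g :: "'j \<Rightarrow> ('a \<Rightarrow> 'b) \<Rightarrow> real"
  assumes A: "finite A" and J: "finite J"
    and BA: "\<And>j. j \<in> J \<Longrightarrow> B j \<subseteq> A"
    and disj: "\<And>i j. i \<in> J \<Longrightarrow> j \<in> J \<Longrightarrow> i \<noteq> j \<Longrightarrow> B i \<inter> B j = {}"
    and g: "\<And>j. j \<in> J \<Longrightarrow> depends_on (B j) (g j)"
    and C: "C \<subseteq> A" and BC: "\<And>j. j \<in> J \<Longrightarrow> B j \<inter> C = {}"
    and f: "depends_on C f"
  shows "measure_pmf.expectation (Pi_pmf A dflt D) (\<lambda>y. f y * (\<Prod>j\<in>J. g j y))
       = measure_pmf.expectation (Pi_pmf A dflt D) f *
         (\<Prod>j\<in>J. measure_pmf.expectation (Pi_pmf A dflt D) (g j))"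
  using J BA disj g C BC f
proof (induction J arbitrary: f C rule: finite_induct)
  case empty
  then show ?case by simp
next
  case (insert k J)
  let ?E = "measure_pmf.expectation (Pi_pmf A dflt D)"
  have "?E (\<lambda>y. f y * (\<Prod>j\<in>insert k J. g j y)) = ?E (\<lambda>y. (f y * g k y) * (\<Prod>j\<in>J. g j y))"
    using insert.hyps by (simp add: mult_ac)
  also have "\<dots> = ?E (\<lambda>y. f y * g k y) * (\<Prod>j\<in>J. ?E (g j))"
  proof (rule insert.IH)
    show "depends_on (C \<union> B k) (\<lambda>y. f y * g k y)"
      using insert.prems by (intro depends_on_mult) auto
    fix j assume j: "j \<in> J"
    have "B j \<inter> B k = {}" using insert.prems(2)[of j k] insert.hyps j by auto
    thus "B j \<inter> (C \<union> B k) = {}" using insert.prems(5)[of j] j by auto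
  qed (use insert.prems in auto)
  also have "?E (\<lambda>y. f y * g k y) = ?E f * ?E (g k)"
    using insert.prems by (intro expectation_Pi_pmf_mult[OF A, of C "B k"]) auto
  finally show ?case using insert.hyps by (simp add: mult_ac)
qed

lemma expectation_Pi_pmf_insert_bernoulli:
  fixes f :: "('a \<Rightarrow> bool) \<Rightarrow> real"
  assumes "finite B" "x \<notin> B" "0 \<le> p" "p \<le> 1"
  shows "measure_pmf.expectation (Pi_pmf (insert x B) False (\<lambda>_. bernoulli_pmf p)) f
     = p * measure_pmf.expectation (Pi_pmf B False (\<lambda>_. bernoulli_pmf p)) (\<lambda>y. f (y(x:=True)))
     + (1 - p) * measure_pmf.expectation (Pi_pmf B False (\<lambda>_. bernoulli_pmf p)) (\<lambda>y. f (y(x:=False)))"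
  using assms
  by (simp add: Pi_pmf_insert case_prod_unfold expectation_pair_pmf finite_set_pmf_Pi_pmf mult_ac)

section \<open>Counting independent witnesses\<close>

lemma expectation_Pi_pmf_sum_prod_blocks:
  fixes dflt :: "'b::finite" and f :: "('a \<Rightarrow> 'b) \<Rightarrow> real"
    and \<phi> :: "'u \<Rightarrow> 'w \<Rightarrow> ('a \<Rightarrow> 'b) \<Rightarrow> real" and \<psi> :: "'v \<Rightarrow> 'w \<Rightarrow> ('a \<Rightarrow> 'b) \<Rightarrow> real"
  assumes A: "finite A" and R: "finite R"
    and BA: "\<And>w. w \<in> R \<Longrightarrow> B w \<subseteq> A"
    and disj: "\<And>w w'. w \<in> R \<Longrightarrow> w' \<in> R \<Longrightarrow> w \<noteq> w' \<Longrightarrow> B w \<inter> B w' = {}"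
    and C: "C \<subseteq> A" and BC: "\<And>w. w \<in> R \<Longrightarrow> B w \<inter> C = {}" and f: "depends_on C f"
    and \<phi>: "\<And>a w. a \<in> U \<Longrightarrow> w \<in> R \<Longrightarrow> depends_on (B w) (\<phi> a w)"
    and \<psi>: "\<And>b w. b \<in> V \<Longrightarrow> w \<in> R \<Longrightarrow> depends_on (B w) (\<psi> b w)"
  shows "measure_pmf.expectation (Pi_pmf A dflt D)
           (\<lambda>y. f y * (\<Sum>a\<in>U. \<Prod>w\<in>R. \<phi> a w y) * (\<Sum>b\<in>V. \<Prod>w\<in>R. \<psi> b w y))
      = measure_pmf.expectation (Pi_pmf A dflt D) f *
        (\<Sum>a\<in>U. \<Sum>b\<in>V. \<Prod>w\<in>R. measure_pmf.expectation (Pi_pmf A dflt D) (\<lambda>y. \<phi> a w y * \<psi> b w y))"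
proof -
  let ?E = "measure_pmf.expectation (Pi_pmf A dflt D)"
  have "(\<lambda>y. f y * (\<Sum>a\<in>U. \<Prod>w\<in>R. \<phi> a w y) * (\<Sum>b\<in>V. \<Prod>w\<in>R. \<psi> b w y))
     = (\<lambda>y. \<Sum>a\<in>U. \<Sum>b\<in>V. f y * (\<Prod>w\<in>R. \<phi> a w y * \<psi> b w y))"
    by (simp add: sum_distrib_left sum_distrib_right prod.distrib mult_ac)
  hence "?E (\<lambda>y. f y * (\<Sum>a\<in>U. \<Prod>w\<in>R. \<phi> a w y) * (\<Sum>b\<in>V. \<Prod>w\<in>R. \<psi> b w y))
      = (\<Sum>a\<in>U. \<Sum>b\<in>V. ?E (\<lambda>y. f y * (\<Prod>w\<in>R. \<phi> a w y * \<psi> b w y)))"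
    using A by (simp add: Bochner_Integration.integral_sum integrable_Pi_pmf_finite)
  also have "\<dots> = (\<Sum>a\<in>U. \<Sum>b\<in>V. ?E f * (\<Prod>w\<in>R. ?E (\<lambda>y. \<phi> a w y * \<psi> b w y)))"
  proof (intro sum.cong refl expectation_Pi_pmf_prod_blocks[OF A R BA disj _ C BC f])
    fix a b w assume "a \<in> U" "b \<in> V" "w \<in> R"
    thus "depends_on (B w) (\<lambda>y. \<phi> a w y * \<psi> b w y)"
      using depends_on_mult[OF \<phi>[of a w] \<psi>[of b w]] by simp
  qed
  finally show ?thesis by (simp only: sum_distrib_left)
qed

lemma prod_of_bool: "finite R \<Longrightarrow> (\<Prod>w\<in>R. of_bool (P w) :: real) = of_bool (\<forall>w\<in>R. P w)"
  by (induction R rule: finite_induct) auto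

lemma finite_card_subsets: "finite R \<Longrightarrow> finite {S. S \<subseteq> R \<and> card S = k}"
  by (rule finite_subset[of _ "Pow R"]) auto

lemma of_bool_card_eq_sum_prod:
  assumes R: "finite R"
  shows "(of_bool (card {w\<in>R. P w} = k) :: real)
       = (\<Sum>S | S \<subseteq> R \<and> card S = k. \<Prod>w\<in>R. of_bool (P w \<longleftrightarrow> w \<in> S))"
proof -
  have "(\<Sum>S | S \<subseteq> R \<and> card S = k. \<Prod>w\<in>R. (of_bool (P w \<longleftrightarrow> w \<in> S) :: real))
      = (\<Sum>S | S \<subseteq> R \<and> card S = k. if S = {w\<in>R. P w} then 1 else 0)"
    using R by (intro sum.cong refl) (auto simp: prod_of_bool)
  also have "\<dots> = of_bool (card {w\<in>R. P w} = k)"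
    using finite_card_subsets[OF R] by (simp add: sum.delta')
  finally show ?thesis ..
qed

text \<open>If the pairs \<open>(\<alpha> w, \<beta> w)\<close>, \<open>w \<in> R\<close>, are independent with joint law \<open>s\<close>, this is the
  probability that exactly \<open>i\<close> of the \<open>\<alpha> w\<close> and exactly \<open>j\<close> of the \<open>\<beta> w\<close> hold.\<close>
definition joint_count_prob :: "'w set \<Rightarrow> nat \<Rightarrow> nat \<Rightarrow> (bool \<Rightarrow> bool \<Rightarrow> real) \<Rightarrow> real" where
  "joint_count_prob R i j s =
     (\<Sum>S | S \<subseteq> R \<and> card S = i. \<Sum>T | T \<subseteq> R \<and> card T = j. \<Prod>w\<in>R. s (w \<in> S) (w \<in> T))"

lemma expectation_Pi_pmf_mult_counts:
  fixes dflt :: "'b::finite" and f :: "('a \<Rightarrow> 'b) \<Rightarrow> real"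
    and \<alpha> \<beta> :: "'w \<Rightarrow> ('a \<Rightarrow> 'b) \<Rightarrow> bool"
  assumes A: "finite A" and R: "finite R"
    and BA: "\<And>w. w \<in> R \<Longrightarrow> B w \<subseteq> A"
    and disj: "\<And>w w'. w \<in> R \<Longrightarrow> w' \<in> R \<Longrightarrow> w \<noteq> w' \<Longrightarrow> B w \<inter> B w' = {}"
    and C: "C \<subseteq> A" and BC: "\<And>w. w \<in> R \<Longrightarrow> B w \<inter> C = {}" and f: "depends_on C f"
    and \<alpha>: "\<And>w. w \<in> R \<Longrightarrow> depends_on (B w) (\<alpha> w)"
    and \<beta>: "\<And>w. w \<in> R \<Longrightarrow> depends_on (B w) (\<beta> w)"
    and s: "\<And>w a b. w \<in> R \<Longrightarrow> measure_pmf.expectation (Pi_pmf A dflt D)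
              (\<lambda>y. of_bool ((\<alpha> w y \<longleftrightarrow> a) \<and> (\<beta> w y \<longleftrightarrow> b))) = s a b"
  shows "measure_pmf.expectation (Pi_pmf A dflt D)
           (\<lambda>y. f y * of_bool (card {w\<in>R. \<alpha> w y} = i) * of_bool (card {w\<in>R. \<beta> w y} = j))
       = measure_pmf.expectation (Pi_pmf A dflt D) f * joint_count_prob R i j s"
proof -
  let ?E = "measure_pmf.expectation (Pi_pmf A dflt D)"
  have "?E (\<lambda>y. f y * of_bool (card {w\<in>R. \<alpha> w y} = i) * of_bool (card {w\<in>R. \<beta> w y} = j))
      = ?E f * (\<Sum>S | S \<subseteq> R \<and> card S = i. \<Sum>T | T \<subseteq> R \<and> card T = j. \<Prod>w\<in>R.
           ?E (\<lambda>y. of_bool (\<alpha> w y \<longleftrightarrow> w \<in> S) * of_bool (\<beta> w y \<longleftrightarrow> w \<in> T)))"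
    unfolding of_bool_card_eq_sum_prod[OF R]
  proof (rule expectation_Pi_pmf_sum_prod_blocks[OF A R BA disj C BC f])
    fix S T w assume w: "w \<in> R"
    show "depends_on (B w) (\<lambda>y. of_bool (\<alpha> w y \<longleftrightarrow> w \<in> S))"
      using depends_on_comp[OF \<alpha>[OF w], of "\<lambda>t. of_bool (t \<longleftrightarrow> w \<in> S)"] .
    show "depends_on (B w) (\<lambda>y. of_bool (\<beta> w y \<longleftrightarrow> w \<in> T))"
      using depends_on_comp[OF \<beta>[OF w], of "\<lambda>t. of_bool (t \<longleftrightarrow> w \<in> T)"] .
  qed
  also have "\<dots> = ?E f * joint_count_prob R i j s"
  proof -
    have "?E (\<lambda>y. of_bool (\<alpha> w y \<longleftrightarrow> w \<in> S) * of_bool (\<beta> w y \<longleftrightarrow> w \<in> T))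
        = s (w \<in> S) (w \<in> T)" if "w \<in> R" for w S T
      using s[OF that, of "w \<in> S" "w \<in> T"] by (simp add: of_bool_conj)
    thus ?thesis unfolding joint_count_prob_def by simp
  qed
  finally show ?thesis .
qed

lemma prod_eq_one_point:
  assumes "finite R" "w1 \<in> R" "\<And>w. w \<in> R \<Longrightarrow> w \<noteq> w1 \<Longrightarrow> h w = b"
  shows "(\<Prod>w\<in>R. h w) = h w1 * (b::real) ^ (card R - 1)"
proof -
  have "(\<Prod>w\<in>R. h w) = h w1 * (\<Prod>w\<in>R - {w1}. h w)"
    using assms by (simp add: prod.remove)
  also have "(\<Prod>w\<in>R - {w1}. h w) = (\<Prod>w\<in>R - {w1}. b)"
    using assms(3) by (intro prod.cong) auto
  finally show ?thesis using assms(1,2) by simp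
qed

lemma prod_eq_two_points:
  assumes "finite R" "w1 \<in> R" "w2 \<in> R" "w1 \<noteq> w2" "\<And>w. w \<in> R \<Longrightarrow> w \<noteq> w1 \<Longrightarrow> w \<noteq> w2 \<Longrightarrow> h w = b"
  shows "(\<Prod>w\<in>R. h w) = h w1 * h w2 * (b::real) ^ (card R - 2)"
proof -
  have "(\<Prod>w\<in>R. h w) = h w1 * (\<Prod>w\<in>R - {w1}. h w)"
    using assms by (simp add: prod.remove)
  also have "(\<Prod>w\<in>R - {w1}. h w) = h w2 * b ^ (card (R - {w1}) - 1)"
    using assms by (intro prod_eq_one_point) auto
  finally show ?thesis using assms(1,2) by (simp add: numeral_2_eq_2 diff_diff_add)
qed

lemma sum_card_0_subsets: "finite R \<Longrightarrow> (\<Sum>S | S \<subseteq> R \<and> card S = 0. g S) = g {}"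
proof -
  assume "finite R"
  hence "{S. S \<subseteq> R \<and> card S = 0} = {{}}" using finite_subset by (fastforce simp: card_eq_0_iff)
  thus ?thesis by simp
qed

lemma sum_card_1_subsets: "(\<Sum>S | S \<subseteq> R \<and> card S = 1. g S) = (\<Sum>w\<in>R. g {w})"
proof -
  have "{S. S \<subseteq> R \<and> card S = 1} = (\<lambda>w. {w}) ` R" by (auto simp: card_1_singleton_iff)
  thus ?thesis by (simp add: sum.reindex)
qed

lemma joint_count_prob_0_0: "finite R \<Longrightarrow> joint_count_prob R 0 0 s = s False False ^ card R"
  by (simp add: joint_count_prob_def sum_card_0_subsets)

lemma joint_count_prob_1_0:
  assumes "finite R"
  shows "joint_count_prob R 1 0 s = real (card R) * s True False * s False False ^ (card R - 1)"
proof -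
  have "(\<Prod>w\<in>R. s (w = w1) False) = s True False * s False False ^ (card R - 1)" if "w1 \<in> R" for w1
    using prod_eq_one_point[OF assms that, of "\<lambda>w. s (w = w1) False"] by simp
  thus ?thesis
    unfolding joint_count_prob_def sum_card_0_subsets[OF assms] sum_card_1_subsets by simp
qed

lemma joint_count_prob_0_1:
  assumes "finite R"
  shows "joint_count_prob R 0 1 s = real (card R) * s False True * s False False ^ (card R - 1)"
proof -
  have "(\<Prod>w\<in>R. s False (w = w1)) = s False True * s False False ^ (card R - 1)" if "w1 \<in> R" for w1
    using prod_eq_one_point[OF assms that, of "\<lambda>w. s False (w = w1)"] by simp
  thus ?thesis
    unfolding joint_count_prob_def sum_card_0_subsets[OF assms] sum_card_1_subsets by simp
qed

lemma joint_count_prob_1_1: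
  assumes R: "finite R"
  shows "joint_count_prob R 1 1 s = real (card R) * (s True True * s False False ^ (card R - 1)
           + real (card R - 1) * s True False * s False True * s False False ^ (card R - 2))"
proof -
  have "(\<Sum>w2\<in>R. \<Prod>w\<in>R. s (w = w1) (w = w2))
      = s True True * s False False ^ (card R - 1)
        + real (card R - 1) * s True False * s False True * s False False ^ (card R - 2)"
    if w1: "w1 \<in> R" for w1
  proof -
    have "(\<Sum>w2\<in>R. \<Prod>w\<in>R. s (w = w1) (w = w2))
        = (\<Prod>w\<in>R. s (w = w1) (w = w1)) + (\<Sum>w2\<in>R - {w1}. \<Prod>w\<in>R. s (w = w1) (w = w2))"
      using R w1 by (simp add: sum.remove)
    also have "(\<Prod>w\<in>R. s (w = w1) (w = w1)) = s True True * s False False ^ (card R - 1)"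
      using prod_eq_one_point[OF R w1, of "\<lambda>w. s (w = w1) (w = w1)"] by simp
    also have "(\<Sum>w2\<in>R - {w1}. \<Prod>w\<in>R. s (w = w1) (w = w2))
        = (\<Sum>w2\<in>R - {w1}. s True False * s False True * s False False ^ (card R - 2))"
    proof (intro sum.cong refl)
      fix w2 assume w2: "w2 \<in> R - {w1}"
      show "(\<Prod>w\<in>R. s (w = w1) (w = w2)) = s True False * s False True * s False False ^ (card R - 2)"
        using prod_eq_two_points[OF R w1, of w2 "\<lambda>w. s (w = w1) (w = w2)"] w2 by auto
    qed
    also have "\<dots> = real (card R - 1) * s True False * s False True * s False False ^ (card R - 2)"
      using R w1 by simp
    finally show ?thesis .
  qed
  hence "(\<Sum>w1\<in>R. \<Sum>w2\<in>R. \<Prod>w\<in>R. s (w \<in> {w1}) (w \<in> {w2}))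
      = (\<Sum>w1\<in>R. s True True * s False False ^ (card R - 1)
        + real (card R - 1) * s True False * s False True * s False False ^ (card R - 2))"
    by (intro sum.cong) simp_all
  moreover have "joint_count_prob R 1 1 s = (\<Sum>w1\<in>R. \<Sum>w2\<in>R. \<Prod>w\<in>R. s (w \<in> {w1}) (w \<in> {w2}))"
    unfolding joint_count_prob_def sum_card_1_subsets ..
  ultimately show ?thesis by (simp only: sum_constant)
qed

section \<open>Triangles and the resampling step\<close>

lemma finite_vpairs: "finite (vpairs n)"
  unfolding vpairs_def by (rule finite_subset[of _ "Pow {1..n}"]) auto

lemma card_vpairs: "card (vpairs n) = n choose 2"
  unfolding vpairs_def using n_subsets[of "{1..n}" 2] by simp

lemma doubleton_in_vpairs: "u \<noteq> v \<Longrightarrow> u \<in> {1..n} \<Longrightarrow> v \<in> {1..n} \<Longrightarrow> {u, v} \<in> vpairs n"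
  unfolding vpairs_def by auto

lemma vpairsE:
  assumes "e \<in> vpairs n"
  obtains u v where "e = {u, v}" "u \<noteq> v" "u \<in> {1..n}" "v \<in> {1..n}"
  using assms unfolding vpairs_def by (auto simp: card_2_iff)

lemma vpairs_subset: "e \<in> vpairs n \<Longrightarrow> e \<subseteq> {1..n}"
  unfolding vpairs_def by simp

definition common_nbrs_in :: "nat set \<Rightarrow> nat set \<Rightarrow> (nat set \<Rightarrow> bool) \<Rightarrow> nat set" where
  "common_nbrs_in S e y = {w\<in>S. \<forall>a\<in>e. y {a, w}}"

definition triangle_sets :: "nat \<Rightarrow> nat set set \<Rightarrow> nat set set" where
  "triangle_sets n G = {T. T \<subseteq> {1..n} \<and> card T = 3 \<and> (\<forall>x\<in>T. \<forall>y\<in>T. x \<noteq> y \<longrightarrow> {x, y} \<in> G)}"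

lemma finite_triangle_sets: "finite (triangle_sets n G)"
  unfolding triangle_sets_def by (rule finite_subset[of _ "Pow {1..n}"]) auto

lemma triangles_eq_card: "triangles n G = card (triangle_sets n G)"
  unfolding triangles_def triangle_sets_def ..

lemma triangles_mono: "G' \<subseteq> G \<Longrightarrow> triangles n G' \<le> triangles n G"
  unfolding triangles_eq_card
  by (rule card_mono[OF finite_triangle_sets]) (auto simp: triangle_sets_def)

lemma triangle_sets_insert:
  assumes e: "e = {u, v}" "u \<noteq> v" "u \<in> {1..n}" "v \<in> {1..n}" and eG: "e \<notin> G"
  shows "triangle_sets n (insert e G)
       = triangle_sets n G \<union> (\<lambda>w. {u, v, w}) ` common_nbrs_in ({1..n} - e) e (\<lambda>f. f \<in> G)"
    (is "_ = _ \<union> _ ` ?W")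
proof (intro equalityI subsetI)
  fix T assume T: "T \<in> triangle_sets n (insert e G)"
  show "T \<in> triangle_sets n G \<union> (\<lambda>w. {u, v, w}) ` ?W"
  proof (cases "u \<in> T \<and> v \<in> T")
    case False
    hence "T \<in> triangle_sets n G" using T e unfolding triangle_sets_def by (auto simp: doubleton_eq_iff)
    thus ?thesis by blast
  next
    case True
    have cT: "card T = 3" "T \<subseteq> {1..n}" using T unfolding triangle_sets_def by auto
    have "finite T" using cT by (auto intro: finite_subset)
    hence "card (T - {u, v}) = 1" using True cT e by (simp add: card_Diff_subset)
    then obtain w where "T - {u, v} = {w}" by (auto simp: card_1_singleton_iff)
    hence Tw: "T = {u, v, w}" "w \<notin> {u, v}" using True by auto
    have "{u, w} \<in> insert e G" "{v, w} \<in> insert e G" using T Tw unfolding triangle_sets_def by auto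
    hence "{u, w} \<in> G" "{v, w} \<in> G" using Tw e by (auto simp: doubleton_eq_iff)
    hence "w \<in> ?W" using Tw cT e unfolding common_nbrs_in_def by auto
    thus ?thesis using Tw by blast
  qed
next
  fix T assume "T \<in> triangle_sets n G \<union> (\<lambda>w. {u, v, w}) ` ?W"
  thus "T \<in> triangle_sets n (insert e G)"
  proof
    assume "T \<in> triangle_sets n G" thus ?thesis unfolding triangle_sets_def by auto
  next
    assume "T \<in> (\<lambda>w. {u, v, w}) ` ?W"
    then obtain w where w: "w \<in> ?W" "T = {u, v, w}" by auto
    have "{u, w} \<in> G" "{v, w} \<in> G" "w \<notin> {u, v}" "w \<in> {1..n}"
      using w e unfolding common_nbrs_in_def by auto
    thus ?thesis using w e unfolding triangle_sets_def by (auto simp: insert_commute card_insert_if)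
  qed
qed

lemma triangles_insert:
  assumes e: "e \<in> vpairs n" and eG: "e \<notin> G"
  shows "triangles n (insert e G) = triangles n G + card (common_nbrs_in ({1..n} - e) e (\<lambda>f. f \<in> G))"
proof -
  obtain u v where uv: "e = {u, v}" "u \<noteq> v" "u \<in> {1..n}" "v \<in> {1..n}" using e by (rule vpairsE)
  let ?W = "common_nbrs_in ({1..n} - e) e (\<lambda>f. f \<in> G)"
  have "triangle_sets n G \<inter> (\<lambda>w. {u, v, w}) ` ?W = {}"
    using eG uv unfolding triangle_sets_def by auto
  moreover have "inj_on (\<lambda>w. {u, v, w}) ?W"
    using uv unfolding common_nbrs_in_def inj_on_def by auto
  moreover have "finite ?W" unfolding common_nbrs_in_def by auto
  ultimately show ?thesis
    unfolding triangles_eq_card triangle_sets_insert[OF uv eG]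
    by (simp add: card_Un_disjoint finite_triangle_sets card_image)
qed

lemma Q1_eq_card:
  assumes n: "n \<ge> 2" and p: "0 \<le> p" "p \<le> 1"
  shows "Q1 n p G = p * card {e\<in>vpairs n. e \<notin> G \<and> card (common_nbrs_in ({1..n} - e) e (\<lambda>f. f \<in> G)) = 1}
                      / (n choose 2)"
proof -
  let ?P = "vpairs n"
  let ?step = "\<lambda>(e, b). if b then insert e G else G - {e}"
  let ?A = "{e. triangles n (insert e G) = triangles n G + 1}"
  have P: "?P \<noteq> {}" "finite ?P" using doubleton_in_vpairs[of 1 2 n] n finite_vpairs by auto
  have "resample n p G = map_pmf ?step (pair_pmf (pmf_of_set ?P) (bernoulli_pmf p))"
    unfolding resample_def map_pmf_def pair_pmf_def by (simp add: bind_assoc_pmf bind_return_pmf)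
  moreover have "?step -` {G'. triangles n G' = triangles n G + 1} = ?A \<times> {True}"
  proof -
    have "triangles n (G - {e}) \<noteq> triangles n G + 1" for e
      using triangles_mono[of "G - {e}" G n] by auto
    thus ?thesis by (auto split: if_splits)
  qed
  ultimately have "Q1 n p G = measure_pmf.prob (pair_pmf (pmf_of_set ?P) (bernoulli_pmf p)) (?A \<times> {True})"
    unfolding Q1_def by simp
  also have "\<dots> = measure_pmf.prob (pair_pmf (pmf_of_set ?P) (bernoulli_pmf p)) ((?P \<inter> ?A) \<times> {True})"
    by (intro measure_prob_cong_0) (auto simp: pmf_pair P indicator_def)
  also have "\<dots> = measure_pmf.prob (pmf_of_set ?P) (?P \<inter> ?A) * p"
    using p P by (simp add: measure_pmf_prob_product countable_finite measure_pmf_single)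
  also have "measure_pmf.prob (pmf_of_set ?P) (?P \<inter> ?A) = card (?P \<inter> ?A) / card ?P"
    using P by (simp add: measure_pmf_of_set)
  also have "?P \<inter> ?A = {e\<in>?P. e \<notin> G \<and> card (common_nbrs_in ({1..n} - e) e (\<lambda>f. f \<in> G)) = 1}"
  proof -
    have "triangles n (insert e G) = triangles n G + 1
        \<longleftrightarrow> e \<notin> G \<and> card (common_nbrs_in ({1..n} - e) e (\<lambda>f. f \<in> G)) = 1" if "e \<in> ?P" for e
      using triangles_insert[OF that] by (cases "e \<in> G") (auto simp: insert_absorb)
    thus ?thesis by auto
  qed
  finally show ?thesis by (simp add: card_vpairs)
qed

definition closes_one_triangle :: "nat \<Rightarrow> nat set \<Rightarrow> (nat set \<Rightarrow> bool) \<Rightarrow> real" where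
  "closes_one_triangle n e y = of_bool (\<not> y e \<and> card (common_nbrs_in ({1..n} - e) e y) = 1)"

lemma Q1_eq_sum_closes_one_triangle:
  assumes "n \<ge> 2" "0 \<le> p" "p \<le> 1"
  shows "Q1 n p {e\<in>vpairs n. y e} = p / real (n choose 2) * (\<Sum>e\<in>vpairs n. closes_one_triangle n e y)"
proof -
  let ?G = "{e\<in>vpairs n. y e}"
  have "common_nbrs_in ({1..n} - e) e (\<lambda>f. f \<in> ?G) = common_nbrs_in ({1..n} - e) e y"
    if "e \<in> vpairs n" for e
    using that vpairs_subset[OF that]
    unfolding common_nbrs_in_def by (auto intro!: doubleton_in_vpairs)
  hence "{e\<in>vpairs n. e \<notin> ?G \<and> card (common_nbrs_in ({1..n} - e) e (\<lambda>f. f \<in> ?G)) = 1}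
      = {e\<in>vpairs n. \<not> y e \<and> card (common_nbrs_in ({1..n} - e) e y) = 1}"
    by auto
  thus ?thesis
    using Q1_eq_card[OF assms, of ?G] finite_vpairs
    by (simp add: closes_one_triangle_def Int_def conj_commute)
qed

lemma card_Diff_vpair: "e \<in> vpairs n \<Longrightarrow> card ({1..n} - e) = n - 2"
  unfolding vpairs_def by (subst card_Diff_subset) (auto intro: finite_subset)

lemma closes_one_triangle_mult_self:
  "closes_one_triangle n e y * closes_one_triangle n e y = closes_one_triangle n e y"
  by (simp add: closes_one_triangle_def)

section \<open>Second moments of the closing indicators\<close>

definition gnp_indicators :: "nat \<Rightarrow> real \<Rightarrow> (nat set \<Rightarrow> bool) pmf" where
  "gnp_indicators n p = Pi_pmf (vpairs n) False (\<lambda>_. bernoulli_pmf p)"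

lemma of_bool_add_eq_1:
  "(of_bool (k + c = (1::nat)) :: real) = (\<Sum>i\<in>{0,1}. of_bool (c = i) * of_bool (k = 1 - i))"
  by (cases c; cases k) auto

lemma common_nbrs_in_Un:
  "common_nbrs_in (S \<union> T) e y = common_nbrs_in S e y \<union> common_nbrs_in T e y"
  unfolding common_nbrs_in_def by auto

lemma finite_common_nbrs_in: "finite S \<Longrightarrow> finite (common_nbrs_in S e y)"
  unfolding common_nbrs_in_def by simp

definition inner_config :: "nat set \<Rightarrow> nat set \<Rightarrow> nat \<Rightarrow> nat \<Rightarrow> (nat set \<Rightarrow> bool) \<Rightarrow> real" where
  "inner_config e f i j y = of_bool (\<not> y e \<and> \<not> y f \<and> card (common_nbrs_in (f - e) e y) = i
                                     \<and> card (common_nbrs_in (e - f) f y) = j)"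

lemma depends_on_inner_config:
  assumes e: "e \<in> vpairs n" and f: "f \<in> vpairs n"
  shows "depends_on {g\<in>vpairs n. g \<subseteq> e \<union> f} (inner_config e f i j)"
proof (rule depends_onI)
  fix y y' :: "nat set \<Rightarrow> bool" assume eq: "\<And>g. g \<in> {g\<in>vpairs n. g \<subseteq> e \<union> f} \<Longrightarrow> y g = y' g"
  have "{c, w} \<in> {g\<in>vpairs n. g \<subseteq> e \<union> f}" if "c \<in> e \<union> f" "w \<in> e \<union> f" "c \<noteq> w" for c w
    using that vpairs_subset[OF e] vpairs_subset[OF f] by (auto intro!: doubleton_in_vpairs)
  note in_block = eq[OF this]
  have "y e = y' e" "y f = y' f" using eq e f by auto
  moreover have "common_nbrs_in (f - e) e y = common_nbrs_in (f - e) e y'"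
    "common_nbrs_in (e - f) f y = common_nbrs_in (e - f) f y'"
    unfolding common_nbrs_in_def using in_block by (auto 4 4)
  ultimately show "inner_config e f i j y = inner_config e f i j y'" unfolding inner_config_def by simp
qed

text \<open>The common neighbours of \<open>e\<close> split into those outside \<open>e \<union> f\<close>, which are independent
  across vertices, and those in \<open>f - e\<close>, which only involve pairs inside \<open>e \<union> f\<close>.\<close>
lemma closes_one_triangle_mult_split:
  assumes e: "e \<in> vpairs n" and f: "f \<in> vpairs n"
  defines "R \<equiv> {1..n} - (e \<union> f)"
  shows "closes_one_triangle n e y * closes_one_triangle n f y =
    (\<Sum>i\<in>{0,1}. \<Sum>j\<in>{0,1}. inner_config e f i j y
       * of_bool (card (common_nbrs_in R e y) = 1 - i) * of_bool (card (common_nbrs_in R f y) = 1 - j))"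
    (is "_ = ?rhs")
proof -
  have card_split: "card (common_nbrs_in ({1..n} - g) g y)
      = card (common_nbrs_in R g y) + card (common_nbrs_in (h - g) g y)"
    if "h \<in> vpairs n" "g \<union> h = e \<union> f" for g h
  proof -
    have "{1..n} - g = R \<union> (h - g)" using vpairs_subset[OF that(1)] that(2) by (auto simp: R_def)
    hence "common_nbrs_in ({1..n} - g) g y = common_nbrs_in R g y \<union> common_nbrs_in (h - g) g y"
      by (simp add: common_nbrs_in_Un)
    moreover have "common_nbrs_in R g y \<inter> common_nbrs_in (h - g) g y = {}"
      using that(2) by (auto simp: common_nbrs_in_def R_def)
    moreover have "finite h" "finite R" using vpairs_subset[OF that(1)] finite_subset by (auto simp: R_def)
    ultimately show ?thesis
      by (simp add: card_Un_disjoint finite_common_nbrs_in)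
  qed
  have "closes_one_triangle n e y * closes_one_triangle n f y =
      of_bool (\<not> y e) * of_bool (\<not> y f)
      * (\<Sum>i\<in>{0,1}. of_bool (card (common_nbrs_in (f - e) e y) = i) * of_bool (card (common_nbrs_in R e y) = 1 - i))
      * (\<Sum>j\<in>{0,1}. of_bool (card (common_nbrs_in (e - f) f y) = j) * of_bool (card (common_nbrs_in R f y) = 1 - j))"
    unfolding closes_one_triangle_def card_split[OF f refl] card_split[OF e Un_commute] of_bool_conj
      of_bool_add_eq_1[symmetric] by simp
  also have "\<dots> = ?rhs"
    by (simp add: inner_config_def sum_distrib_left sum_distrib_right of_bool_conj mult_ac)
  finally show ?thesis .
qed

lemma expectation_closes_one_triangle_mult:
  assumes e: "e \<in> vpairs n" and f: "f \<in> vpairs n"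
    and s: "\<And>w a b. w \<in> {1..n} - (e \<union> f) \<Longrightarrow> measure_pmf.expectation (gnp_indicators n p)
              (\<lambda>y. of_bool (((\<forall>c\<in>e. y {c, w}) \<longleftrightarrow> a) \<and> ((\<forall>c\<in>f. y {c, w}) \<longleftrightarrow> b))) = s a b"
  shows "measure_pmf.expectation (gnp_indicators n p)
           (\<lambda>y. closes_one_triangle n e y * closes_one_triangle n f y)
       = (\<Sum>i\<in>{0,1}. \<Sum>j\<in>{0,1}. measure_pmf.expectation (gnp_indicators n p) (inner_config e f i j)
          * joint_count_prob ({1..n} - (e \<union> f)) (1 - i) (1 - j) s)"
proof -
  let ?R = "{1..n} - (e \<union> f)"
  let ?E = "measure_pmf.expectation (Pi_pmf (vpairs n) False (\<lambda>_. bernoulli_pmf p))"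
  define B where "B w = (\<lambda>c. {c, w}) ` (e \<union> f)" for w
  define C where "C = {g\<in>vpairs n. g \<subseteq> e \<union> f}"
  have ef: "e \<union> f \<subseteq> {1..n}" using vpairs_subset e f by auto
  have BA: "B w \<subseteq> vpairs n" if "w \<in> ?R" for w
    using that ef unfolding B_def by (auto intro!: doubleton_in_vpairs)
  have disj: "B w \<inter> B w' = {}" if "w \<in> ?R" "w' \<in> ?R" "w \<noteq> w'" for w w'
    using that unfolding B_def by (auto simp: doubleton_eq_iff)
  have BC: "B w \<inter> C = {}" if "w \<in> ?R" for w
    using that unfolding B_def C_def by auto
  have e_dep: "depends_on (B w) (\<lambda>y. \<forall>c\<in>e. y {c, w})" if "w \<in> ?R" for w
    unfolding B_def by (rule depends_onI) auto
  have f_dep: "depends_on (B w) (\<lambda>y. \<forall>c\<in>f. y {c, w})" if "w \<in> ?R" for w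
    unfolding B_def by (rule depends_onI) auto
  have "?E (\<lambda>y. closes_one_triangle n e y * closes_one_triangle n f y)
      = ?E (\<lambda>y. \<Sum>i\<in>{0,1}. \<Sum>j\<in>{0,1}. inner_config e f i j y * of_bool (card {w\<in>?R. \<forall>c\<in>e. y {c, w}} = 1 - i)
                                  * of_bool (card {w\<in>?R. \<forall>c\<in>f. y {c, w}} = 1 - j))"
    unfolding closes_one_triangle_mult_split[OF e f] common_nbrs_in_def ..
  also have "\<dots> = (\<Sum>i\<in>{0,1}. \<Sum>j\<in>{0,1}. ?E (\<lambda>y. inner_config e f i j y
        * of_bool (card {w\<in>?R. \<forall>c\<in>e. y {c, w}} = 1 - i) * of_bool (card {w\<in>?R. \<forall>c\<in>f. y {c, w}} = 1 - j)))"
    by (simp only: Bochner_Integration.integral_sum integrable_Pi_pmf_finite[OF finite_vpairs])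
  also have "\<dots> = (\<Sum>i\<in>{0,1}. \<Sum>j\<in>{0,1}. ?E (inner_config e f i j) * joint_count_prob ?R (1 - i) (1 - j) s)"
    by (intro sum.cong refl expectation_Pi_pmf_mult_counts[OF finite_vpairs _ BA disj _ BC
          depends_on_inner_config[OF e f, folded C_def] e_dep f_dep s[unfolded gnp_indicators_def]]) (auto simp: C_def)
  finally show ?thesis unfolding gnp_indicators_def .
qed

lemma card_common_nbrs_in_doubleton:
  assumes "x \<noteq> z"
  shows "card (common_nbrs_in {x, z} e y) = of_bool (\<forall>a\<in>e. y {a, x}) + of_bool (\<forall>a\<in>e. y {a, z})"
proof -
  have "common_nbrs_in {x, z} e y
      = (if \<forall>a\<in>e. y {a, x} then {x} else {}) \<union> (if \<forall>a\<in>e. y {a, z} then {z} else {})"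
    unfolding common_nbrs_in_def by auto
  thus ?thesis using assms by simp
qed

lemma vpairs_other_endpoint:
  assumes "e \<in> vpairs n" "c \<in> e"
  obtains v where "e = {c, v}" "v \<noteq> c" "v \<in> {1..n}"
proof -
  obtain a b where ab: "e = {a, b}" "a \<noteq> b" "a \<in> {1..n}" "b \<in> {1..n}" using assms(1) by (rule vpairsE)
  show ?thesis
  proof (cases "c = a")
    case True thus ?thesis using ab that by auto
  next
    case False hence "c = b" using ab assms(2) by auto
    thus ?thesis using ab that[of a] by (auto simp: insert_commute)
  qed
qed

lemma expectation_gnp_indicators_restrict:
  fixes g :: "(nat set \<Rightarrow> bool) \<Rightarrow> real"
  assumes "S \<subseteq> vpairs n" "depends_on S g"
  shows "measure_pmf.expectation (gnp_indicators n p) g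
       = measure_pmf.expectation (Pi_pmf S False (\<lambda>_. bernoulli_pmf p)) g"
  unfolding gnp_indicators_def by (rule expectation_Pi_pmf_restrict[OF finite_vpairs assms])

lemma expectation_gnp_indicators_2:
  fixes g :: "bool \<Rightarrow> bool \<Rightarrow> real"
  assumes "{a, b} \<subseteq> vpairs n" "a \<noteq> b" "0 \<le> p" "p \<le> 1"
  shows "measure_pmf.expectation (gnp_indicators n p) (\<lambda>y. g (y a) (y b))
       = (\<integral>A. \<integral>B. g A B \<partial>bernoulli_pmf p \<partial>bernoulli_pmf p)"
proof -
  have "measure_pmf.expectation (gnp_indicators n p) (\<lambda>y. g (y a) (y b))
      = measure_pmf.expectation (Pi_pmf {a, b} False (\<lambda>_. bernoulli_pmf p)) (\<lambda>y. g (y a) (y b))"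
    using assms(1) by (intro expectation_gnp_indicators_restrict depends_onI) auto
  also have "\<dots> = (\<integral>A. \<integral>B. g A B \<partial>bernoulli_pmf p \<partial>bernoulli_pmf p)"
    using assms by (simp add: expectation_Pi_pmf_insert_bernoulli algebra_simps)
  finally show ?thesis .
qed

lemma expectation_gnp_indicators_3:
  fixes g :: "bool \<Rightarrow> bool \<Rightarrow> bool \<Rightarrow> real"
  assumes "{a, b, c} \<subseteq> vpairs n" "a \<noteq> b" "a \<noteq> c" "b \<noteq> c" "0 \<le> p" "p \<le> 1"
  shows "measure_pmf.expectation (gnp_indicators n p) (\<lambda>y. g (y a) (y b) (y c))
       = (\<integral>A. \<integral>B. \<integral>C. g A B C \<partial>bernoulli_pmf p \<partial>bernoulli_pmf p \<partial>bernoulli_pmf p)"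
proof -
  have "measure_pmf.expectation (gnp_indicators n p) (\<lambda>y. g (y a) (y b) (y c))
      = measure_pmf.expectation (Pi_pmf {a, b, c} False (\<lambda>_. bernoulli_pmf p)) (\<lambda>y. g (y a) (y b) (y c))"
    using assms(1) by (intro expectation_gnp_indicators_restrict depends_onI) auto
  also have "\<dots> = (\<integral>A. \<integral>B. \<integral>C. g A B C \<partial>bernoulli_pmf p \<partial>bernoulli_pmf p \<partial>bernoulli_pmf p)"
    using assms by (simp add: expectation_Pi_pmf_insert_bernoulli algebra_simps)
  finally show ?thesis .
qed

lemma expectation_gnp_indicators_4:
  fixes g :: "bool \<Rightarrow> bool \<Rightarrow> bool \<Rightarrow> bool \<Rightarrow> real"
  assumes "{a, b, c, d} \<subseteq> vpairs n" "a \<noteq> b" "a \<noteq> c" "a \<noteq> d" "b \<noteq> c" "b \<noteq> d" "c \<noteq> d"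
    "0 \<le> p" "p \<le> 1"
  shows "measure_pmf.expectation (gnp_indicators n p) (\<lambda>y. g (y a) (y b) (y c) (y d))
       = (\<integral>A. \<integral>B. \<integral>C. \<integral>D. g A B C D
            \<partial>bernoulli_pmf p \<partial>bernoulli_pmf p \<partial>bernoulli_pmf p \<partial>bernoulli_pmf p)"
proof -
  have "measure_pmf.expectation (gnp_indicators n p) (\<lambda>y. g (y a) (y b) (y c) (y d))
      = measure_pmf.expectation (Pi_pmf {a, b, c, d} False (\<lambda>_. bernoulli_pmf p)) (\<lambda>y. g (y a) (y b) (y c) (y d))"
    using assms(1) by (intro expectation_gnp_indicators_restrict depends_onI) auto
  also have "\<dots> = (\<integral>A. \<integral>B. \<integral>C. \<integral>D. g A B C D
            \<partial>bernoulli_pmf p \<partial>bernoulli_pmf p \<partial>bernoulli_pmf p \<partial>bernoulli_pmf p)"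
    using assms by (simp add: expectation_Pi_pmf_insert_bernoulli algebra_simps)
  finally show ?thesis .
qed

definition moment_same :: "nat \<Rightarrow> real \<Rightarrow> real" where
  "moment_same n p = real (n-2) * ((1-p) * p^2 * (1-p^2)^(n-3))"

definition moment_adjacent :: "nat \<Rightarrow> real \<Rightarrow> real" where
  "moment_adjacent n p = (1-p)^2 * (real (n-3) * (p^3 * (1-2*p^2+p^3)^(n-4)
     + real (n-4) * (p^2*(1-p)) * (p^2*(1-p)) * (1-2*p^2+p^3)^(n-5)))"

definition moment_disjoint :: "nat \<Rightarrow> real \<Rightarrow> real" where
  "moment_disjoint n p = (1-p)^2 * (((1-p)^4 + 4*p*(1-p)^3 + 2*p^2*(1-p)^2) *
       (real (n-4) * (p^4 * ((1-p^2)^2) ^ (n-5) + real (n-5) * (p^2*(1-p^2)) * (p^2*(1-p^2)) * ((1-p^2)^2) ^ (n-6)))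
     + 2*p^2*(1-p)^2 * (real (n-4) * (p^2*(1-p^2) * ((1-p^2)^2) ^ (n-5)))
     + 2*p^2*(1-p)^2 * (real (n-4) * (p^2*(1-p^2) * ((1-p^2)^2) ^ (n-5)))
     + 4*p^3*(1-p) * ((1-p^2)^2) ^ (n-4))"

lemma expectation_closes_one_triangle:
  assumes e: "e \<in> vpairs n" and p: "0 \<le> p" "p \<le> 1"
  shows "measure_pmf.expectation (gnp_indicators n p) (closes_one_triangle n e) = moment_same n p"
proof -
  obtain u v where uv: "e = {u, v}" "u \<noteq> v" "u \<in> {1..n}" "v \<in> {1..n}" using e by (rule vpairsE)
  let ?E = "measure_pmf.expectation (gnp_indicators n p)"
  let ?R = "{1..n} - (e \<union> e)"
  define s where "s a b = (\<integral>A. \<integral>B. (of_bool ((A \<and> B \<longleftrightarrow> a) \<and> (A \<and> B \<longleftrightarrow> b)) :: real)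
    \<partial>bernoulli_pmf p \<partial>bernoulli_pmf p)" for a b :: bool
  have s_simps: "s True True = p^2" "s True False = 0" "s False True = 0" "s False False = 1 - p^2"
    using p by (simp_all add: s_def power2_eq_square algebra_simps)
  have s: "?E (\<lambda>y. of_bool (((\<forall>c\<in>e. y {c, w}) \<longleftrightarrow> a) \<and> ((\<forall>c\<in>e. y {c, w}) \<longleftrightarrow> b))) = s a b"
    if w: "w \<in> ?R" for w a b
  proof -
    have "{{u, w}, {v, w}} \<subseteq> vpairs n" "{u, w} \<noteq> {v, w}"
      using w uv by (auto intro!: doubleton_in_vpairs simp: doubleton_eq_iff)
    from expectation_gnp_indicators_2[OF this p,
        where g = "\<lambda>A B. of_bool ((A \<and> B \<longleftrightarrow> a) \<and> (A \<and> B \<longleftrightarrow> b))"]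
    show ?thesis by (simp add: uv s_def)
  qed
  have inner: "?E (inner_config e e i j) = of_bool (i = 0 \<and> j = 0) * (1 - p)" for i j
  proof -
    let ?g = "\<lambda>y. of_bool (\<not> y e \<and> i = 0 \<and> j = 0) :: real"
    have "inner_config e e i j = ?g"
      by (simp add: fun_eq_iff inner_config_def common_nbrs_in_def)
    moreover have "?E ?g = measure_pmf.expectation (Pi_pmf {e} False (\<lambda>_. bernoulli_pmf p)) ?g"
      using e by (intro expectation_gnp_indicators_restrict depends_onI) auto
    ultimately show ?thesis using p by (simp add: expectation_Pi_pmf_insert_bernoulli)
  qed
  have "?E (closes_one_triangle n e)
      = (\<Sum>i\<in>{0,1}. \<Sum>j\<in>{0,1}. of_bool (i = 0 \<and> j = 0) * (1 - p) * joint_count_prob ?R (1 - i) (1 - j) s)"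
    using expectation_closes_one_triangle_mult[OF e e s] unfolding inner closes_one_triangle_mult_self by simp
  moreover have "card ?R = n - 2" using card_Diff_vpair[OF e] by simp
  ultimately show ?thesis
    using joint_count_prob_1_1[of ?R s] by (simp add: s_simps moment_same_def numeral_eq_Suc)
qed

lemma expectation_inner_config_adjacent:
  assumes e: "e = {c, v}" and f: "f = {c, x}" and "c \<noteq> v" "c \<noteq> x" "v \<noteq> x"
    and "c \<in> {1..n}" "v \<in> {1..n}" "x \<in> {1..n}" and p: "0 \<le> p" "p \<le> 1"
  shows "measure_pmf.expectation (gnp_indicators n p) (inner_config e f i j) = of_bool (i = 0 \<and> j = 0) * (1 - p)^2"
proof -
  have "f - e = {x}" "e - f = {v}" using assms by auto
  hence "common_nbrs_in (f - e) e y = (if y f \<and> y {v, x} then {x} else {})"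
    "common_nbrs_in (e - f) f y = (if y e \<and> y {x, v} then {v} else {})" for y
    unfolding common_nbrs_in_def e f by auto
  hence "inner_config e f i j = (\<lambda>y. of_bool (i = 0 \<and> j = 0) * of_bool (\<not> y e \<and> \<not> y f))"
    by (auto simp: fun_eq_iff inner_config_def)
  moreover have "measure_pmf.expectation (gnp_indicators n p) (\<lambda>y. of_bool (\<not> y e \<and> \<not> y f)) = (1 - p)^2"
  proof -
    have "{e, f} \<subseteq> vpairs n" "e \<noteq> f"
      using assms by (auto intro!: doubleton_in_vpairs simp: doubleton_eq_iff)
    from expectation_gnp_indicators_2[OF this p, where g = "\<lambda>A B. of_bool (\<not> A \<and> \<not> B)"]
    show ?thesis using p by (simp add: power2_eq_square)
  qed
  ultimately show ?thesis by simp
qed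

lemma expectation_closes_one_triangle_mult_adjacent:
  assumes e: "e \<in> vpairs n" and f: "f \<in> vpairs n" and ef: "e \<noteq> f" "e \<inter> f \<noteq> {}"
    and p: "0 \<le> p" "p \<le> 1"
  shows "measure_pmf.expectation (gnp_indicators n p)
           (\<lambda>y. closes_one_triangle n e y * closes_one_triangle n f y) = moment_adjacent n p"
proof -
  let ?E = "measure_pmf.expectation (gnp_indicators n p)"
  let ?R = "{1..n} - (e \<union> f)"
  obtain c where c: "c \<in> e" "c \<in> f" using ef(2) by auto
  obtain v where v: "e = {c, v}" "v \<noteq> c" "v \<in> {1..n}" using vpairs_other_endpoint[OF e c(1)] .
  obtain x where x: "f = {c, x}" "x \<noteq> c" "x \<in> {1..n}" using vpairs_other_endpoint[OF f c(2)] .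
  have cvx: "c \<noteq> v" "c \<noteq> x" "v \<noteq> x" "c \<in> {1..n}" "v \<in> {1..n}" "x \<in> {1..n}"
    using ef(1) v x vpairs_subset[OF e] by auto
  define s where "s a b = (\<integral>A. \<integral>B. \<integral>C. (of_bool ((A \<and> B \<longleftrightarrow> a) \<and> (A \<and> C \<longleftrightarrow> b)) :: real)
    \<partial>bernoulli_pmf p \<partial>bernoulli_pmf p \<partial>bernoulli_pmf p)" for a b :: bool
  have s_simps: "s True True = p^3" "s True False = p^2*(1-p)" "s False True = p^2*(1-p)"
      "s False False = 1-2*p^2+p^3"
    using p by (simp_all add: s_def power2_eq_square power3_eq_cube algebra_simps)
  have s: "?E (\<lambda>y. of_bool (((\<forall>c\<in>e. y {c, w}) \<longleftrightarrow> a) \<and> ((\<forall>c\<in>f. y {c, w}) \<longleftrightarrow> b))) = s a b"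
    if w: "w \<in> ?R" for w a b
  proof -
    have "{{c, w}, {v, w}, {x, w}} \<subseteq> vpairs n" "{c, w} \<noteq> {v, w}" "{c, w} \<noteq> {x, w}" "{v, w} \<noteq> {x, w}"
      using w cvx v x by (auto intro!: doubleton_in_vpairs simp: doubleton_eq_iff)
    from expectation_gnp_indicators_3[OF this p,
        where g = "\<lambda>A B C. of_bool ((A \<and> B \<longleftrightarrow> a) \<and> (A \<and> C \<longleftrightarrow> b))"]
    show ?thesis by (simp add: v x s_def)
  qed
  have "?E (\<lambda>y. closes_one_triangle n e y * closes_one_triangle n f y)
      = (\<Sum>i\<in>{0,1}. \<Sum>j\<in>{0,1}. of_bool (i = 0 \<and> j = 0) * (1 - p)^2 * joint_count_prob ?R (1 - i) (1 - j) s)"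
    using expectation_closes_one_triangle_mult[OF e f s]
      expectation_inner_config_adjacent[OF v(1) x(1) cvx p] by simp
  moreover have "card ?R = n - 3"
  proof -
    have "e \<union> f = {c, v, x}" "card {c, v, x} = 3" using v x cvx by auto
    thus ?thesis using cvx by (simp add: card_Diff_subset)
  qed
  ultimately show ?thesis
    using joint_count_prob_1_1[of ?R s]
    by (simp add: s_simps moment_adjacent_def numeral_eq_Suc power2_eq_square)
qed

text \<open>For disjoint pairs \<open>{u, v}\<close> and \<open>{x, z}\<close>, the four pairs \<open>ux, uz, vx, vz\<close> between them
  form a 4-cycle; this is the probability that it gives \<open>{u, v}\<close> exactly \<open>i\<close> and \<open>{x, z}\<close>
  exactly \<open>j\<close> common neighbours.\<close>
definition cross_count_prob :: "real \<Rightarrow> nat \<Rightarrow> nat \<Rightarrow> real" where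
  "cross_count_prob p i j = (\<integral>A. \<integral>B. \<integral>C. \<integral>D.
      of_bool (of_bool (A \<and> C) + of_bool (B \<and> D) = i \<and> of_bool (A \<and> B) + of_bool (C \<and> D) = j)
    \<partial>bernoulli_pmf p \<partial>bernoulli_pmf p \<partial>bernoulli_pmf p \<partial>bernoulli_pmf p)"

lemma cross_count_prob_values:
  assumes "0 \<le> p" "p \<le> 1"
  shows "cross_count_prob p 0 0 = (1-p)^4 + 4*p*(1-p)^3 + 2*p^2*(1-p)^2"
    "cross_count_prob p 0 1 = 2*p^2*(1-p)^2" "cross_count_prob p 1 0 = 2*p^2*(1-p)^2"
    "cross_count_prob p 1 1 = 4*p^3*(1-p)"
  using assms
  by (simp_all add: cross_count_prob_def power2_eq_square power3_eq_cube power4_eq_xxxx algebra_simps)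

lemma expectation_inner_config_disjoint:
  assumes e: "e = {u, v}" and f: "f = {x, z}" and "u \<noteq> v" "x \<noteq> z"
    and dist: "u \<noteq> x" "u \<noteq> z" "v \<noteq> x" "v \<noteq> z"
    and "u \<in> {1..n}" "v \<in> {1..n}" "x \<in> {1..n}" "z \<in> {1..n}" and p: "0 \<le> p" "p \<le> 1"
  shows "measure_pmf.expectation (gnp_indicators n p) (inner_config e f i j)
       = (1 - p)^2 * cross_count_prob p i j"
proof -
  let ?E = "measure_pmf.expectation (gnp_indicators n p)"
  let ?cross = "\<lambda>y. of_bool (of_bool (y {u, x} \<and> y {v, x}) + of_bool (y {u, z} \<and> y {v, z}) = i
                  \<and> of_bool (y {u, x} \<and> y {u, z}) + of_bool (y {v, x} \<and> y {v, z}) = j) :: real"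
  have "f - e = {x, z}" "e - f = {u, v}" using assms by auto
  hence "card (common_nbrs_in (f - e) e y) = of_bool (y {u, x} \<and> y {v, x}) + of_bool (y {u, z} \<and> y {v, z})"
    "card (common_nbrs_in (e - f) f y) = of_bool (y {u, x} \<and> y {u, z}) + of_bool (y {v, x} \<and> y {v, z})" for y
    using card_common_nbrs_in_doubleton[OF \<open>x \<noteq> z\<close>, of e y] card_common_nbrs_in_doubleton[OF \<open>u \<noteq> v\<close>, of f y]
    by (simp_all add: e f insert_commute)
  hence "inner_config e f i j = (\<lambda>y. of_bool (\<not> y e \<and> \<not> y f) * ?cross y)"
    by (simp add: fun_eq_iff inner_config_def of_bool_conj mult.assoc)
  hence "?E (inner_config e f i j) = ?E (\<lambda>y. of_bool (\<not> y e \<and> \<not> y f) * ?cross y)" by simp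
  also have "\<dots> = ?E (\<lambda>y. of_bool (\<not> y e \<and> \<not> y f)) * ?E ?cross"
    unfolding gnp_indicators_def using assms
    by (intro expectation_Pi_pmf_mult[OF finite_vpairs, where C = "{e, f}" and B = "{{u, x}, {u, z}, {v, x}, {v, z}}"]
        depends_onI) (auto intro!: doubleton_in_vpairs simp: doubleton_eq_iff)
  also have "?E (\<lambda>y. of_bool (\<not> y e \<and> \<not> y f)) = (1 - p)^2"
  proof -
    have "{e, f} \<subseteq> vpairs n" "e \<noteq> f"
      using assms by (auto intro!: doubleton_in_vpairs simp: doubleton_eq_iff)
    from expectation_gnp_indicators_2[OF this p, where g = "\<lambda>A B. of_bool (\<not> A \<and> \<not> B)"]
    show ?thesis using p by (simp add: power2_eq_square)
  qed
  also have "?E ?cross = cross_count_prob p i j"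
  proof -
    have "{{u, x}, {u, z}, {v, x}, {v, z}} \<subseteq> vpairs n"
      "{u, x} \<noteq> {u, z}" "{u, x} \<noteq> {v, x}" "{u, x} \<noteq> {v, z}"
      "{u, z} \<noteq> {v, x}" "{u, z} \<noteq> {v, z}" "{v, x} \<noteq> {v, z}"
      using assms by (auto intro!: doubleton_in_vpairs simp: doubleton_eq_iff)
    from expectation_gnp_indicators_4[OF this p, where g = "\<lambda>A B C D.
        of_bool (of_bool (A \<and> C) + of_bool (B \<and> D) = i \<and> of_bool (A \<and> B) + of_bool (C \<and> D) = j)"]
    show ?thesis by (simp add: cross_count_prob_def)
  qed
  finally show ?thesis .
qed

lemma expectation_closes_one_triangle_mult_disjoint:
  assumes e: "e \<in> vpairs n" and f: "f \<in> vpairs n" and ef: "e \<inter> f = {}"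
    and p: "0 \<le> p" "p \<le> 1"
  shows "measure_pmf.expectation (gnp_indicators n p)
           (\<lambda>y. closes_one_triangle n e y * closes_one_triangle n f y) = moment_disjoint n p"
proof -
  let ?E = "measure_pmf.expectation (gnp_indicators n p)"
  let ?R = "{1..n} - (e \<union> f)"
  obtain u v where uv: "e = {u, v}" "u \<noteq> v" "u \<in> {1..n}" "v \<in> {1..n}" using e by (rule vpairsE)
  obtain x z where xz: "f = {x, z}" "x \<noteq> z" "x \<in> {1..n}" "z \<in> {1..n}" using f by (rule vpairsE)
  have dist: "u \<noteq> x" "u \<noteq> z" "v \<noteq> x" "v \<noteq> z" using ef uv xz by auto
  define s where "s a b = (\<integral>A. \<integral>B. \<integral>C. \<integral>D. (of_bool ((A \<and> B \<longleftrightarrow> a) \<and> (C \<and> D \<longleftrightarrow> b)) :: real)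
    \<partial>bernoulli_pmf p \<partial>bernoulli_pmf p \<partial>bernoulli_pmf p \<partial>bernoulli_pmf p)" for a b :: bool
  have s_simps: "s True True = p^4" "s True False = p^2*(1-p^2)" "s False True = p^2*(1-p^2)"
      "s False False = (1-p^2)^2"
    using p by (simp_all add: s_def power2_eq_square power4_eq_xxxx algebra_simps)
  have s: "?E (\<lambda>y. of_bool (((\<forall>c\<in>e. y {c, w}) \<longleftrightarrow> a) \<and> ((\<forall>c\<in>f. y {c, w}) \<longleftrightarrow> b))) = s a b"
    if w: "w \<in> ?R" for w a b
  proof -
    have "{{u, w}, {v, w}, {x, w}, {z, w}} \<subseteq> vpairs n"
      "{u, w} \<noteq> {v, w}" "{u, w} \<noteq> {x, w}" "{u, w} \<noteq> {z, w}"
      "{v, w} \<noteq> {x, w}" "{v, w} \<noteq> {z, w}" "{x, w} \<noteq> {z, w}"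
      using w uv xz dist by (auto intro!: doubleton_in_vpairs simp: doubleton_eq_iff)
    from expectation_gnp_indicators_4[OF this p,
        where g = "\<lambda>A B C D. of_bool ((A \<and> B \<longleftrightarrow> a) \<and> (C \<and> D \<longleftrightarrow> b))"]
    show ?thesis by (simp add: uv xz s_def)
  qed
  have "?E (\<lambda>y. closes_one_triangle n e y * closes_one_triangle n f y)
      = (\<Sum>i\<in>{0,1}. \<Sum>j\<in>{0,1}. (1 - p)^2 * cross_count_prob p i j * joint_count_prob ?R (1 - i) (1 - j) s)"
    using expectation_closes_one_triangle_mult[OF e f s]
      expectation_inner_config_disjoint[OF uv(1) xz(1) uv(2) xz(2) dist uv(3,4) xz(3,4) p] by simp
  also have "\<dots> = (1 - p)^2 * (cross_count_prob p 0 0 * joint_count_prob ?R 1 1 s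
      + cross_count_prob p 0 1 * joint_count_prob ?R 1 0 s + cross_count_prob p 1 0 * joint_count_prob ?R 0 1 s
      + cross_count_prob p 1 1 * joint_count_prob ?R 0 0 s)"
    by (simp add: algebra_simps)
  also have "\<dots> = moment_disjoint n p"
  proof -
    have "e \<union> f = {u, v, x, z}" "card {u, v, x, z} = 4" using uv xz dist by auto
    hence cR: "card ?R = n - 4" using uv xz by (simp add: card_Diff_subset)
    hence cR': "card ?R - 1 = n - 5" "card ?R - 2 = n - 6" by simp_all
    have fin: "finite ?R" by simp
    show ?thesis
      unfolding joint_count_prob_1_1[OF fin] joint_count_prob_1_0[OF fin]
        joint_count_prob_0_1[OF fin] joint_count_prob_0_0[OF fin] s_simps cross_count_prob_values[OF p] cR' cR
      by (simp add: moment_disjoint_def mult.assoc)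
  qed
  finally show ?thesis .
qed

lemma card_vpairs_disjoint:
  assumes "e \<in> vpairs n"
  shows "card {f\<in>vpairs n. f \<inter> e = {}} = (n - 2) choose 2"
proof -
  have "{f\<in>vpairs n. f \<inter> e = {}} = {f. f \<subseteq> {1..n} - e \<and> card f = 2}"
    unfolding vpairs_def by auto
  thus ?thesis using n_subsets[of "{1..n} - e" 2] card_Diff_vpair[OF assms] by simp
qed

lemma card_vpairs_adjacent:
  assumes "e \<in> vpairs n"
  shows "card {f\<in>vpairs n. f \<noteq> e \<and> f \<inter> e \<noteq> {}} = 2 * (n - 2)"
proof -
  obtain u v where uv: "e = {u, v}" "u \<noteq> v" "u \<in> {1..n}" "v \<in> {1..n}" using assms by (rule vpairsE)
  have "{f\<in>vpairs n. f \<noteq> e \<and> f \<inter> e \<noteq> {}}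
      = (\<lambda>w. {u, w}) ` ({1..n} - e) \<union> (\<lambda>w. {v, w}) ` ({1..n} - e)"
  proof (intro equalityI subsetI)
    fix f assume "f \<in> {f\<in>vpairs n. f \<noteq> e \<and> f \<inter> e \<noteq> {}}"
    then obtain c where f: "f \<in> vpairs n" "f \<noteq> e" "c \<in> f" "c \<in> e" by auto
    obtain w where w: "f = {c, w}" "w \<noteq> c" "w \<in> {1..n}" using vpairs_other_endpoint[OF f(1,3)] .
    have "w \<notin> e" using w f uv by (auto simp: doubleton_eq_iff)
    thus "f \<in> (\<lambda>w. {u, w}) ` ({1..n} - e) \<union> (\<lambda>w. {v, w}) ` ({1..n} - e)"
      using w f(4) uv(1) by auto
  qed (use uv in \<open>auto intro!: doubleton_in_vpairs simp: doubleton_eq_iff\<close>)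
  moreover have "inj_on (\<lambda>w. {u, w}) ({1..n} - e)" "inj_on (\<lambda>w. {v, w}) ({1..n} - e)"
    using uv by (auto simp: inj_on_def doubleton_eq_iff)
  moreover have "(\<lambda>w. {u, w}) ` ({1..n} - e) \<inter> (\<lambda>w. {v, w}) ` ({1..n} - e) = {}"
    using uv by (auto simp: doubleton_eq_iff)
  ultimately show ?thesis using card_Diff_vpair[OF assms] by (simp add: card_Un_disjoint card_image)
qed

lemma sum_expectation_closes_one_triangle_mult:
  assumes e: "e \<in> vpairs n" and p: "0 \<le> p" "p \<le> 1"
  shows "(\<Sum>f\<in>vpairs n. measure_pmf.expectation (gnp_indicators n p)
            (\<lambda>y. closes_one_triangle n e y * closes_one_triangle n f y))
       = moment_same n p + real (2 * (n - 2)) * moment_adjacent n p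
         + real ((n - 2) choose 2) * moment_disjoint n p"
proof -
  let ?F = "\<lambda>f. measure_pmf.expectation (gnp_indicators n p)
                  (\<lambda>y. closes_one_triangle n e y * closes_one_triangle n f y)"
  define adj where "adj = {f\<in>vpairs n. f \<noteq> e \<and> f \<inter> e \<noteq> {}}"
  define disj where "disj = {f\<in>vpairs n. f \<inter> e = {}}"
  have split: "vpairs n = insert e (adj \<union> disj)" "e \<notin> adj \<union> disj" "adj \<inter> disj = {}"
    using e vpairs_subset[OF e] unfolding adj_def disj_def by (auto simp: vpairs_def)
  have fin: "finite adj" "finite disj" unfolding adj_def disj_def using finite_vpairs by auto
  have "?F e = moment_same n p"
    using expectation_closes_one_triangle[OF e p] by (simp add: closes_one_triangle_mult_self)
  moreover have "?F f = moment_adjacent n p" if "f \<in> adj" for f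
    using that expectation_closes_one_triangle_mult_adjacent[OF e _ _ _ p] unfolding adj_def by auto
  moreover have "?F f = moment_disjoint n p" if "f \<in> disj" for f
    using that expectation_closes_one_triangle_mult_disjoint[OF e _ _ p] unfolding disj_def by auto
  ultimately have "(\<Sum>f\<in>vpairs n. ?F f) = moment_same n p + real (card adj) * moment_adjacent n p
                                          + real (card disj) * moment_disjoint n p"
    using split fin by (simp add: sum.union_disjoint)
  thus ?thesis
    using card_vpairs_adjacent[OF e] card_vpairs_disjoint[OF e] unfolding adj_def disj_def by simp
qed

section \<open>The variance\<close>

definition Q1_variance :: "nat \<Rightarrow> real \<Rightarrow> real" where
  "Q1_variance n p = (p / real (n choose 2))^2 * (real (n choose 2) * (moment_same n p
     + real (2 * (n - 2)) * moment_adjacent n p + real ((n - 2) choose 2) * moment_disjoint n p)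
     - (real (n choose 2) * moment_same n p)^2)"

lemma variance_Q1:
  assumes n: "n \<ge> 2" and p: "0 \<le> p" "p \<le> 1"
  shows "measure_pmf.variance (gnp n p) (Q1 n p) = Q1_variance n p"
proof -
  let ?M = "gnp_indicators n p"
  let ?E = "measure_pmf.expectation ?M"
  let ?P = "vpairs n"
  let ?c = "p / real (n choose 2)"
  define S where "S y = (\<Sum>e\<in>?P. closes_one_triangle n e y)" for y
  have int: "integrable (measure_pmf ?M) f" for f :: "_ \<Rightarrow> real"
    unfolding gnp_indicators_def by (rule integrable_Pi_pmf_finite[OF finite_vpairs])
  have "gnp n p = map_pmf (\<lambda>y. {e \<in> vpairs n. y e}) ?M" unfolding gnp_def gnp_indicators_def ..
  hence "measure_pmf.variance (gnp n p) (Q1 n p) = measure_pmf.variance ?M (\<lambda>y. ?c * S y)"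
    using Q1_eq_sum_closes_one_triangle[OF n p] by (simp add: S_def)
  also have "\<dots> = ?E (\<lambda>y. (?c * S y)^2) - (?E (\<lambda>y. ?c * S y))^2"
    by (rule measure_pmf.variance_eq) (simp_all add: int)
  also have "?E (\<lambda>y. (?c * S y)^2)
      = ?c^2 * (\<Sum>e\<in>?P. \<Sum>f\<in>?P. ?E (\<lambda>y. closes_one_triangle n e y * closes_one_triangle n f y))"
    by (simp add: S_def power2_eq_square sum_product mult_ac int Bochner_Integration.integral_sum)
  also have "\<dots> = ?c^2 * (real (n choose 2) * (moment_same n p + real (2 * (n - 2)) * moment_adjacent n p
                       + real ((n - 2) choose 2) * moment_disjoint n p))"
    using sum_expectation_closes_one_triangle_mult[OF _ p] by (simp add: card_vpairs)
  also have "?E (\<lambda>y. ?c * S y) = ?c * (real (n choose 2) * moment_same n p)"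
    using expectation_closes_one_triangle[OF _ p]
    by (simp add: S_def int Bochner_Integration.integral_sum card_vpairs)
  finally show ?thesis
    unfolding Q1_variance_def by (simp only: power_mult_distrib right_diff_distrib)
qed

lemma real_choose_2: "real (m choose 2) = real m * (real m - 1) / 2"
proof (induction m)
  case (Suc m) thus ?case by (simp add: numeral_2_eq_2 field_simps)
qed simp

lemma real_choose_3: "real (m choose 3) = real m * (real m - 1) * (real m - 2) / 6"
proof (induction m)
  case (Suc m)
  have "Suc m choose 3 = (m choose 2) + (m choose 3)" by (simp add: numeral_3_eq_3 numeral_2_eq_2)
  thus ?case using Suc real_choose_2[of m] by (simp add: field_simps)
qed simp

lemma real_choose_4: "real (m choose 4) = real m * (real m - 1) * (real m - 2) * (real m - 3) / 24"
proof (induction m)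
  case (Suc m)
  have "Suc m choose 4 = (m choose 3) + (m choose 4)" by (simp add: numeral_3_eq_3 eval_nat_numeral)
  thus ?case using Suc real_choose_3[of m] by (simp add: field_simps)
qed simp

definition variance_slack :: "nat \<Rightarrow> real \<Rightarrow> real" where
  "variance_slack n p =
     ((5*real n^2 - 23*real n + 26) * (p^6 * ((1-p)^2 * (1-p^2)^(2*n-6)))) / real (n choose 2)"

definition Q1_variance_bound :: "nat \<Rightarrow> real \<Rightarrow> real" where
  "Q1_variance_bound n p =
      real (n - 2) / real (n choose 2) * p^4 * (1 - p) * (1 - p^2)^(n - 3)
        * (1 - p^2 * (1 - p) * (1 - p^2)^(n - 3))
    + 4 * real ((n - 2) choose 2) / real (n choose 2) * p^5 * (1 - p)^2
        * ((1 - 2*p^2 + p^3)^(n - 4) - p * (1 - p^2)^(2*n - 6))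
    + 4 * real ((n - 2) choose 2) / real (n choose 2) * p^5 * (1 - p)^2
        * (1 - p^2)^(2*n - 8) * (1 - p - p * (1 - p^2)^2)
    + 12 * real ((n - 2) choose 3) / real (n choose 2) * p^6 * (1 - p)^2
        * ((1 - p)^(n - 3) * (1 + p - p^2)^(n - 5) - (1 - p^2)^(2*n - 6))
    + 12 * real ((n - 2) choose 3) / real (n choose 2) * p^6 * (1 - p)^2
        * (1 - p^2)^(2*n - 9) * (- 2*p + 4*p^2 - 3*p^4 + p^6)
    + 3 * real ((n - 2) choose 3) / real (n choose 2) * p^6 * (1 - p)^2
        * (1 - p^2)^(2*n - 10) * (4*p^3 - 7*p^4 + 4*p^6 - p^8)
    + 12 * real ((n - 2) choose 4) / real (n choose 2) * p^6 * (1 - p)^2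
        * (1 - p^2)^(2*n - 10) * (4*p^3 - 7*p^4 + 4*p^6 - p^8)"

lemma variance_slack_nonneg:
  assumes "n \<ge> 2" "0 \<le> p" "p \<le> 1"
  shows "variance_slack n p \<ge> 0"
proof -
  have "5*real n^2 - 23*real n + 26 = (real n - 2) * (5 * real n - 13)"
    by (simp add: algebra_simps power2_eq_square)
  also have "\<dots> \<ge> 0"
    using assms(1) by (cases "n = 2") (auto intro: mult_nonneg_nonneg)
  finally have "5*real n^2 - 23*real n + 26 \<ge> 0" .
  moreover have "1 - p^2 \<ge> 0" using assms(2,3) by (simp add: power_le_one)
  ultimately show ?thesis unfolding variance_slack_def by (intro divide_nonneg_nonneg mult_nonneg_nonneg) auto
qed

lemma common_denominator_identity:
  fixes D A E S c1 c2 c3 c4 c5 c6 c7 r1 r2 r3 r4 r5 r6 r7 p :: real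
  assumes "D \<noteq> 0" "c1*r1 + c2*r2 + c3*r3 + c4*r4 + c5*r5 + c6*r6 + c7*r7 = p^2*(A - D*E^2) + S"
  shows "(p/D)^2*(D*A - (D*E)^2) + S/D = c1/D*r1 + c2/D*r2 + c3/D*r3 + c4/D*r4 + c5/D*r5 + c6/D*r6 + c7/D*r7"
proof -
  have "c1/D*r1 + c2/D*r2 + c3/D*r3 + c4/D*r4 + c5/D*r5 + c6/D*r6 + c7/D*r7
      = (c1*r1 + c2*r2 + c3*r3 + c4*r4 + c5*r5 + c6*r6 + c7*r7) / D"
    by (simp add: add_divide_distrib)
  also have "\<dots> = (p^2*(A - D*E^2) + S) / D" using assms(2) by simp
  also have "\<dots> = (p/D)^2*(D*A - (D*E)^2) + S/D"
    using assms(1) by (simp add: field_simps power2_eq_square)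
  finally show ?thesis ..
qed

lemma Q1_variance_add_slack_large:
  fixes k :: nat and p :: real
  assumes n: "n = k + 6"
  shows "Q1_variance n p + variance_slack n p = Q1_variance_bound n p"
proof -
  define K where "K = real k"
  define Q where "Q = (1-p^2)^k"
  define X where "X = (1-p)^k"
  define Y where "Y = (1+p-p^2)^k"
  have K0: "K \<ge> 0" unfolding K_def by simp
  have nz: "K + 6 \<noteq> 0" "K + 5 \<noteq> 0" using K0 by linarith+
  have XY: "(1-2*p^2+p^3)^k = X * Y" unfolding X_def Y_def
    by (simp add: power_mult_distrib[symmetric] algebra_simps power2_eq_square power3_eq_cube)
  have q2: "((1-p^2)^2)^k = Q^2" unfolding Q_def by (metis power_mult mult.commute)
  have q2k: "(1-p^2)^(2*k) = Q^2" unfolding Q_def by (metis power_mult mult.commute)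
  have Nr: "real (n choose 2) = (K+6)*(K+5)/2"
    unfolding n K_def by (simp add: real_choose_2 field_simps)
  have C2r: "real ((n-2) choose 2) = (K+4)*(K+3)/2"
    unfolding n K_def by (simp add: real_choose_2 field_simps)
  have C3r: "real ((n-2) choose 3) = (K+4)*(K+3)*(K+2)/6"
    unfolding n K_def by (simp add: real_choose_3 field_simps)
  have C4r: "real ((n-2) choose 4) = (K+4)*(K+3)*(K+2)*(K+1)/24"
    unfolding n K_def by (simp add: real_choose_4 field_simps)
  have rn: "real n = K + 6" "real (n-2) = K+4" "real (n-3) = K+3" "real (n-4) = K+2" "real (n-5) = K+1"
    unfolding n K_def by simp_all
  have shift: "n - 2 = k + 4" "n - 3 = k + 3" "n - 4 = k + 2" "n - 5 = k + 1" "n - 6 = k"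
     "2*n - 6 = 2*k + 6" "2*n - 8 = 2*k + 4" "2*n - 9 = 2*k + 3" "2*n - 10 = 2*k + 2"
    unfolding n by simp_all
  have adj: "real (2 * (n - 2)) = 2*(K+4)" unfolding n K_def by simp
  have pw1: "(1-p^2)^(n-3) = Q * (1-p^2)^3" unfolding shift Q_def by (simp add: power_add)
  have pw2: "(1-2*p^2+p^3)^(n-4) = X*Y*(1-2*p^2+p^3)^2" unfolding shift power_add XY ..
  have pw3: "(1-2*p^2+p^3)^(n-5) = X*Y*(1-2*p^2+p^3)" unfolding shift by (simp add: power_add XY)
  have pw4: "(1-p^2)^(2*n-6) = Q^2*(1-p^2)^6" unfolding shift by (simp add: power_add q2k)
  have pw5: "(1-p^2)^(2*n-8) = Q^2*(1-p^2)^4" unfolding shift by (simp add: power_add q2k)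
  have pw6: "(1-p^2)^(2*n-9) = Q^2*(1-p^2)^3" unfolding shift by (simp add: power_add q2k)
  have pw7: "(1-p^2)^(2*n-10) = Q^2*(1-p^2)^2" unfolding shift power_add q2k ..
  have pw8: "(1-p)^(n-3) = X*(1-p)^3" unfolding shift X_def by (simp add: power_add)
  have pw9: "(1+p-p^2)^(n-5) = Y*(1+p-p^2)" unfolding shift Y_def by (simp add: power_add)
  have pw10: "((1-p^2)^2)^(n-5) = Q^2*(1-p^2)^2" unfolding shift power_add q2 by simp
  have pw11: "((1-p^2)^2)^(n-6) = Q^2" unfolding shift by (simp add: q2)
  have pw12: "((1-p^2)^2)^(n-4) = Q^2*((1-p^2)^2)^2" unfolding shift by (simp add: power_add q2)
  note pw = pw1 pw2 pw3 pw4 pw5 pw6 pw7 pw8 pw9 pw10 pw11 pw12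
  show ?thesis
    unfolding Q1_variance_def variance_slack_def Q1_variance_bound_def
  proof (simp only: mult.assoc, rule common_denominator_identity)
    show "real (n choose 2) \<noteq> 0" using nz by (simp add: Nr)
  qed (unfold moment_same_def moment_adjacent_def moment_disjoint_def rn pw Nr C2r C3r C4r adj,
       use nz in \<open>simp add: field_simps\<close>, algebra)
qed

lemma Q1_variance_add_slack_small:
  "Q1_variance 2 p + variance_slack 2 p = Q1_variance_bound 2 p"
  "Q1_variance 3 p + variance_slack 3 p = Q1_variance_bound 3 p"
  "Q1_variance 4 p + variance_slack 4 p = Q1_variance_bound 4 p"
  "Q1_variance 5 p + variance_slack 5 p = Q1_variance_bound 5 p"
  unfolding Q1_variance_def variance_slack_def Q1_variance_bound_def
  by (simp only: mult.assoc; rule common_denominator_identity;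
      simp add: choose_two moment_same_def moment_adjacent_def moment_disjoint_def
        real_choose_2 real_choose_3 real_choose_4 field_simps; algebra)+

lemma Q1_variance_add_slack:
  assumes "n \<ge> 2"
  shows "Q1_variance n p + variance_slack n p = Q1_variance_bound n p"
proof (cases "n \<ge> 6")
  case True
  hence "n = (n - 6) + 6" by simp
  thus ?thesis by (rule Q1_variance_add_slack_large)
next
  case False
  hence "n = 2 \<or> n = 3 \<or> n = 4 \<or> n = 5" using assms by auto
  thus ?thesis using Q1_variance_add_slack_small by auto
qed

theorem lemma11:
  fixes n :: nat and p :: real
  assumes "n \<ge> 2" and "0 \<le> p" and "p \<le> 1"
  shows "measure_pmf.variance (gnp n p) (Q1 n p) \<le>
      real (n - 2) / real (n choose 2) * p^4 * (1 - p) * (1 - p^2)^(n - 3)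
        * (1 - p^2 * (1 - p) * (1 - p^2)^(n - 3))
    + 4 * real ((n - 2) choose 2) / real (n choose 2) * p^5 * (1 - p)^2
        * ((1 - 2*p^2 + p^3)^(n - 4) - p * (1 - p^2)^(2*n - 6))
    + 4 * real ((n - 2) choose 2) / real (n choose 2) * p^5 * (1 - p)^2
        * (1 - p^2)^(2*n - 8) * (1 - p - p * (1 - p^2)^2)
    + 12 * real ((n - 2) choose 3) / real (n choose 2) * p^6 * (1 - p)^2
        * ((1 - p)^(n - 3) * (1 + p - p^2)^(n - 5) - (1 - p^2)^(2*n - 6))
    + 12 * real ((n - 2) choose 3) / real (n choose 2) * p^6 * (1 - p)^2
        * (1 - p^2)^(2*n - 9) * (- 2*p + 4*p^2 - 3*p^4 + p^6)
    + 3 * real ((n - 2) choose 3) / real (n choose 2) * p^6 * (1 - p)^2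
        * (1 - p^2)^(2*n - 10) * (4*p^3 - 7*p^4 + 4*p^6 - p^8)
    + 12 * real ((n - 2) choose 4) / real (n choose 2) * p^6 * (1 - p)^2
        * (1 - p^2)^(2*n - 10) * (4*p^3 - 7*p^4 + 4*p^6 - p^8)"
proof -
  have "measure_pmf.variance (gnp n p) (Q1 n p) \<le> Q1_variance_bound n p"
    using variance_Q1[OF assms] Q1_variance_add_slack[OF assms(1), of p] variance_slack_nonneg[OF assms]
    by linarith
  thus ?thesis unfolding Q1_variance_bound_def .
qed

end
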